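(* Let $n\geq 2$, $R_m,k>0$ and $0\leq\alpha\leq 1$. Let $\Omega\subset\mathbb{R}^n$ be a bounded Lipschitz domain of diameter at most $R_m$ whose complement $\mathbb{R}^n\setminus\Omega$ is connected. Then there exists a positive constant $C$, depending only on $k$, $R_m$ and $n$, such that for every $\varphi\in C^\alpha(\overline{\Omega})$ satisfying \[ \frac{\sup_{\partial\Omega}|\varphi|}{\|\varphi\|_{C^\alpha(\overline\Omega)}}\geq C\,\big(\operatorname{diam}(\Omega)\big)^\alpha, \] the source $\chi_\Omega\varphi$ radiates a non-zero far-field pattern at wavenumber $k$.
   Context: Source scattering: for a bounded domain $\Omega\subset\mathbb{R}^n$, a function $\varphi$ on $\overline\Omega$ and a wavenumber $k>0$, let $f=\chi_\Omega\varphi$ and let $u\in H^2_{loc}(\mathbb{R}^n)$ be the unique solution of $(\Delta+k^2)u=f$ in $\mathbb{R}^n$ satisfying the Sommerfeld radiation condition $\lim_{r\to\infty}r^{(n-1)/2}(\partial_r-ik)u=0$, $r=|x|$. Its far-field pattern is $u_\infty(\hat x)=C_{n,k}\int_{\mathbb{R}^n}e^{-ik\hat x\cdot y}f(y)\,dy$, $\hat x\in\mathbb{S}^{n-1}$, where $C_{n,k}=\frac{-i}{\sqrt{8\pi}}\big(\frac{k}{2\pi}\big)^{(n-2)/2}e^{-(n-1)\pi i/4}$; equivalently $u(x)=\frac{e^{ik|x|}}{|x|^{(n-1)/2}}u_\infty(x/|x|)+$ lower order terms as $|x|\to\infty$. The source "radiates a non-zero far-field pattern" if $u_\infty\not\equiv0$,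 and is "radiationless" if $u_\infty\equiv 0$. $\|\cdot\|_{C^\alpha}$ is the standard Hölder norm. Standing assumption: all bounded domains $\Omega$ considered satisfy $H^2_0(\Omega)=\{u|_\Omega: u\in H^2(\mathbb{R}^n),\ u=0 \text{ in } \mathbb{R}^n\setminus\overline\Omega\}$. *)

theory Defs
  imports "HOL-Analysis.Analysis"
begin

definition lipschitz_domain :: "(real^'n) set \<Rightarrow> bool" where
  "lipschitz_domain \<Omega> \<longleftrightarrow>
     open \<Omega> \<and> bounded \<Omega> \<and> connected \<Omega> \<and> \<Omega> \<noteq> {} \<and>
     (\<forall>p\<in>frontier \<Omega>. \<exists>r>0. \<exists>e::real^'n. norm e = 1 \<and>
        (\<exists>g::real^'n \<Rightarrow> real. (\<exists>L. L-lipschitz_on {y. y \<bullet> e = 0} g) \<and>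
           \<Omega> \<inter> ball p r = {x \<in> ball p r. x \<bullet> e < g (x - (x \<bullet> e) *\<^sub>R e)}))"

definition holder_space :: "real \<Rightarrow> (real^'n) set \<Rightarrow> (real^'n \<Rightarrow> complex) \<Rightarrow> bool" where
  "holder_space \<alpha> S \<phi> \<longleftrightarrow> continuous_on S \<phi> \<and> bdd_above ((\<lambda>x. norm (\<phi> x)) ` S) \<and>
     bdd_above {norm (\<phi> x - \<phi> y) / dist x y powr \<alpha> | x y. x \<in> S \<and> y \<in> S \<and> x \<noteq> y}"

definition holder_norm :: "real \<Rightarrow> (real^'n) set \<Rightarrow> (real^'n \<Rightarrow> complex) \<Rightarrow> real" where
  "holder_norm \<alpha> S \<phi> = (SUP x\<in>S. norm (\<phi> x)) +
     (if \<alpha> = 0 then 0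
      else Sup {norm (\<phi> x - \<phi> y) / dist x y powr \<alpha> | x y. x \<in> S \<and> y \<in> S \<and> x \<noteq> y})"

definition far_field_const :: "nat \<Rightarrow> real \<Rightarrow> complex" where
  "far_field_const n k = (- \<i> / complex_of_real (sqrt (8 * pi))) *
      complex_of_real ((k / (2 * pi)) powr ((real n - 2) / 2)) *
      exp (- (complex_of_real ((real n - 1) * pi / 4)) * \<i>)"

definition far_field :: "real \<Rightarrow> (real^'n) set \<Rightarrow> (real^'n \<Rightarrow> complex) \<Rightarrow> real^'n \<Rightarrow> complex" where
  "far_field k \<Omega> \<phi> xh = far_field_const CARD('n) k *
      integral UNIV (\<lambda>y. exp (- \<i> * complex_of_real (k * (xh \<bullet> y))) * (indicator \<Omega> y * \<phi> y))"

definition radiates_nonzero :: "real \<Rightarrow> (real^'n) set \<Rightarrow> (real^'n \<Rightarrow> complex) \<Rightarrow> bool" where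
  "radiates_nonzero k \<Omega> \<phi> \<longleftrightarrow> (\<exists>xh::real^'n. norm xh = 1 \<and> far_field k \<Omega> \<phi> xh \<noteq> 0)"

end

theory Submission
  imports Defs
begin

text \<open>The ratio hypothesis is very restrictive: since the supremum of \<open>|\<phi>|\<close> over
  \<open>\<partial>\<Omega>\<close> never exceeds \<open>\<parallel>\<phi>\<parallel>\<^sub>C\<^sub>\<alpha>\<close>, it forces \<open>C diam(\<Omega>)\<^sup>\<alpha> \<le> 1\<close>. Hence \<open>\<alpha> > 0\<close>,
  \<open>diam(\<Omega>) \<le> 1/C\<close>, and the Hoelder estimate shows that on \<open>\<Omega>\<close> the density \<open>\<phi>\<close> differs
  from its largest boundary value \<open>c\<close> by at most \<open>|c|/C\<close>. On a set of diameter \<open>\<le> 1/C\<close>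
  the plane wave \<open>exp(-ik x\<^sub>0\<cdot>y)\<close> varies by at most \<open>k/C\<close>, so for \<open>C = 2k + 2\<close> the
  integrand of the far field stays in a disc around a nonzero complex number that misses
  \<open>0\<close>; its integral over the open set \<open>\<Omega>\<close> cannot vanish.\<close>

lemma compact_attains_SUP_norm:
  fixes f :: "'a::topological_space \<Rightarrow> 'b::real_normed_vector"
  assumes "compact T" "T \<noteq> {}" "continuous_on T f"
  obtains x where "x \<in> T" "(SUP y\<in>T. norm (f y)) = norm (f x)"
proof -
  obtain x where "x \<in> T" "\<And>y. y \<in> T \<Longrightarrow> norm (f y) \<le> norm (f x)"
    using continuous_attains_sup[OF assms(1,2) continuous_on_norm[OF assms(3)]] by blast
  then show ?thesis
    using that by (metis (no_types, lifting) cSup_eq_maximum imageE imageI)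
qed

lemma le_if_powr_le_below_one:
  fixes d e \<alpha> :: real
  assumes "0 < d" "0 \<le> \<alpha>" "\<alpha> \<le> 1" "d powr \<alpha> \<le> e" "e < 1"
  shows "d \<le> e"
proof -
  have "d < 1"
    using assms ge_one_powr_ge_zero[of d \<alpha>] by linarith
  then have "d powr 1 \<le> d powr \<alpha>"
    using assms by (intro powr_mono') auto
  with assms show ?thesis
    by simp
qed

lemma margin_lt_if_le_inverse:
  fixes k d b :: real
  assumes "0 < k" "0 \<le> d" "d \<le> 1 / (2 * k + 2)" "0 < b"
  shows "k * d * (b + b / (2 * k + 2)) + b / (2 * k + 2) < b"
proof -
  define C where "C = 2 * k + 2"
  have "1 < C"
    using \<open>0 < k\<close> by (simp add: C_def)
  then have "b / C \<le> b"
    using \<open>0 < b\<close> mult_left_mono[of 1 C b] by (simp add: divide_le_eq)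
  then have "k * d * (b + b / C) \<le> k * (1 / C) * (2 * b)"
    using assms \<open>1 < C\<close> by (intro mult_mono) (auto simp: C_def)
  then have "k * d * (b + b / C) + b / C \<le> (2 * k + 1) * b / C"
    using \<open>1 < C\<close> by (simp add: field_simps)
  also have "\<dots> < b"
    using \<open>0 < b\<close> \<open>1 < C\<close> by (simp add: C_def divide_less_eq)
  finally show ?thesis
    by (simp add: C_def)
qed

lemma measure_pos_if_open:
  fixes S :: "'a::euclidean_space set"
  assumes "open S" "S \<noteq> {}" "S \<in> lmeasurable"
  shows "0 < measure lebesgue S"
  using open_not_negligible[OF assms(1,2)] negligible_iff_measure0[OF assms(3)] measure_nonneg[of lebesgue S]
  by linarith

lemma integral_nonzero_if_near_constant:
  fixes f :: "'a::euclidean_space \<Rightarrow> 'b::euclidean_space"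
  assumes f: "f \<in> borel_measurable (lebesgue_on S)" and S: "S \<in> lmeasurable" "0 < measure lebesgue S"
    and near: "\<And>y. y \<in> S \<Longrightarrow> norm (f y - c) \<le> \<delta>" and "\<delta> < norm c"
  shows "integral S f \<noteq> 0"
proof
  assume "integral S f = 0"
  have const: "((\<lambda>y. c) has_integral measure lebesgue S *\<^sub>R c) S"
    using has_integral_scaleR_left[OF integrable_integral[OF integrable_on_const[OF S(1), of "1::real"]], of c]
    by (simp add: lmeasure_integral[OF S(1)])
  have "(\<lambda>y. norm c + \<delta>) integrable_on S"
    using integrable_on_const[OF S(1)] .
  moreover have "norm (f y) \<le> norm c + \<delta>" if "y \<in> S" for y
    using near[OF that] norm_triangle_sub[of "f y" c] by linarith
  ultimately have "f integrable_on S"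
    using measurable_bounded_by_integrable_imp_integrable[OF f] S(1) by blast
  then have "integral S (\<lambda>y. f y - c) = - (measure lebesgue S *\<^sub>R c)"
    using \<open>integral S f = 0\<close> integral_diff[OF _ has_integral_integrable[OF const]] integral_unique[OF const]
    by simp
  moreover have "norm (integral S (\<lambda>y. f y - c)) \<le> measure lebesgue S * \<delta>"
  proof (rule integral_norm_bound_integral')
    show "(\<lambda>y. f y - c) \<in> borel_measurable (lebesgue_on S)"
      using f by simp
    show "((\<lambda>y. \<delta>) has_integral measure lebesgue S * \<delta>) S"
      using has_integral_mult_right[OF integrable_integral[OF integrable_on_const[OF S(1), of "1::real"]], of \<delta>]
      by (simp add: lmeasure_integral[OF S(1)] mult.commute)
  qed (use near S(1) in auto)
  ultimately have "measure lebesgue S * norm c \<le> measure lebesgue S * \<delta>"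
    by simp
  with S(2) \<open>\<delta> < norm c\<close> show False
    by simp
qed

lemma norm_exp_i_diff_le:
  "norm (exp (\<i> * of_real a) - exp (\<i> * of_real b)) \<le> \<bar>a - b\<bar>"
proof -
  have "exp (\<i> * of_real a) - exp (\<i> * of_real b) = exp (\<i> * of_real b) * (exp (\<i> * of_real (a - b)) - 1)"
    by (simp add: algebra_simps flip: exp_add)
  then have "norm (exp (\<i> * of_real a) - exp (\<i> * of_real b)) = 2 * \<bar>sin ((a - b) / 2)\<bar>"
    by (simp only: norm_mult norm_exp_i_times dist_exp_i_1 mult_1)
  also have "\<dots> \<le> \<bar>a - b\<bar>"
    using abs_sin_x_le_abs_x[of "(a - b) / 2"] by simp
  finally show ?thesis .
qed

lemma norm_plane_wave_diff_le:
  fixes \<xi> y z :: "'a::real_inner"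
  shows "norm (exp (- \<i> * of_real (k * (\<xi> \<bullet> y))) - exp (- \<i> * of_real (k * (\<xi> \<bullet> z))))
           \<le> \<bar>k\<bar> * norm \<xi> * dist y z"
proof -
  have "norm (exp (- \<i> * of_real (k * (\<xi> \<bullet> y))) - exp (- \<i> * of_real (k * (\<xi> \<bullet> z))))
      \<le> \<bar>k * (\<xi> \<bullet> z) - k * (\<xi> \<bullet> y)\<bar>"
    using norm_exp_i_diff_le[of "- (k * (\<xi> \<bullet> y))" "- (k * (\<xi> \<bullet> z))"] by simp
  also have "\<dots> = \<bar>k\<bar> * \<bar>\<xi> \<bullet> (y - z)\<bar>"
    by (simp add: inner_diff_right abs_mult abs_minus_commute flip: right_diff_distrib)
  also have "\<dots> \<le> \<bar>k\<bar> * (norm \<xi> * norm (y - z))"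
    by (intro mult_left_mono Cauchy_Schwarz_ineq2) auto
  finally show ?thesis by (simp add: dist_norm mult.assoc)
qed

lemma radiates_nonzero_if_near_constant:
  fixes \<Omega> :: "(real^'n) set" and \<phi> :: "real^'n \<Rightarrow> complex"
  assumes "k > 0" and \<Omega>: "open \<Omega>" "bounded \<Omega>" "\<Omega> \<noteq> {}" and "continuous_on \<Omega> \<phi>"
    and near: "\<And>y. y \<in> \<Omega> \<Longrightarrow> norm (\<phi> y - c) \<le> \<delta>"
    and small: "k * diameter \<Omega> * (norm c + \<delta>) + \<delta> < norm c"
  shows "radiates_nonzero k \<Omega> \<phi>"
proof -
  define \<xi> :: "real^'n" where "\<xi> = axis undefined 1"
  define w where "w y = exp (- \<i> * of_real (k * (\<xi> \<bullet> y)))" for y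
  obtain y0 where "y0 \<in> \<Omega>" using \<Omega>(3) by blast
  have lm: "\<Omega> \<in> lmeasurable" using lmeasurable_open[OF \<Omega>(2,1)] .
  have near_wave: "norm (w y * \<phi> y - w y0 * c) \<le> k * diameter \<Omega> * (norm c + \<delta>) + \<delta>"
    if "y \<in> \<Omega>" for y
  proof -
    have "norm (w y - w y0) \<le> k * diameter \<Omega>"
      using norm_plane_wave_diff_le[of k \<xi> y y0] diameter_bounded_bound[OF \<Omega>(2) that \<open>y0 \<in> \<Omega>\<close>]
        \<open>k > 0\<close> by (simp add: w_def \<xi>_def) (meson mult_left_mono less_imp_le order_trans)
    moreover have "norm (\<phi> y) \<le> norm c + \<delta>"
      using near[OF that] norm_triangle_sub[of "\<phi> y" c] by linarith
    ultimately have "norm (w y - w y0) * norm (\<phi> y) \<le> k * diameter \<Omega> * (norm c + \<delta>)"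
      using \<open>k > 0\<close> diameter_ge_0[OF \<Omega>(2)] by (intro mult_mono) auto
    moreover have "w y * \<phi> y - w y0 * c = (w y - w y0) * \<phi> y + w y0 * (\<phi> y - c)"
      by (simp add: algebra_simps)
    ultimately show ?thesis
      using norm_triangle_ineq[of "(w y - w y0) * \<phi> y" "w y0 * (\<phi> y - c)"] near[OF that]
      by (simp add: norm_mult w_def norm_exp_i_times)
  qed
  have "integral \<Omega> (\<lambda>y. w y * \<phi> y) \<noteq> 0"
  proof (rule integral_nonzero_if_near_constant[OF _ lm measure_pos_if_open[OF \<Omega>(1,3) lm] near_wave])
    show "(\<lambda>y. w y * \<phi> y) \<in> borel_measurable (lebesgue_on \<Omega>)"
      unfolding w_def
      by (intro continuous_imp_measurable_on_sets_lebesgue continuous_intros assms) (use lm in auto)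
    show "k * diameter \<Omega> * (norm c + \<delta>) + \<delta> < norm (w y0 * c)"
      using small by (simp add: w_def norm_mult norm_exp_i_times)
  qed
  moreover have "far_field_const CARD('n) k \<noteq> 0"
    using \<open>k > 0\<close> by (simp add: far_field_const_def)
  moreover have "(\<lambda>y. exp (- \<i> * of_real (k * (\<xi> \<bullet> y))) * (indicator \<Omega> y * \<phi> y))
      = (\<lambda>y. if y \<in> \<Omega> then w y * \<phi> y else 0)"
    by (auto simp: w_def indicator_def)
  ultimately have "far_field k \<Omega> \<phi> \<xi> \<noteq> 0"
    by (simp add: far_field_def integral_restrict_UNIV)
  then show ?thesis
    unfolding radiates_nonzero_def by (intro exI[of _ \<xi>]) (simp add: \<xi>_def)
qed

definition holder_seminorm :: "real \<Rightarrow> (real^'n) set \<Rightarrow> (real^'n \<Rightarrow> complex) \<Rightarrow> real" where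
  "holder_seminorm \<alpha> S \<phi> = Sup {norm (\<phi> x - \<phi> y) / dist x y powr \<alpha> | x y. x \<in> S \<and> y \<in> S \<and> x \<noteq> y}"

lemma holder_norm_eq_sup_plus_seminorm:
  "\<alpha> \<noteq> 0 \<Longrightarrow> holder_norm \<alpha> S \<phi> = (SUP x\<in>S. norm (\<phi> x)) + holder_seminorm \<alpha> S \<phi>"
  by (simp add: holder_norm_def holder_seminorm_def)

lemma holder_space_norm_diff_le:
  assumes "holder_space \<alpha> S \<phi>" "x \<in> S" "y \<in> S" "x \<noteq> y"
  shows "norm (\<phi> x - \<phi> y) \<le> holder_seminorm \<alpha> S \<phi> * dist x y powr \<alpha>"
proof -
  have "norm (\<phi> x - \<phi> y) / dist x y powr \<alpha> \<le> holder_seminorm \<alpha> S \<phi>"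
    unfolding holder_seminorm_def using assms by (intro cSup_upper) (auto simp: holder_space_def)
  then show ?thesis
    using assms(4) by (simp add: pos_divide_le_eq)
qed

lemma holder_seminorm_nonneg:
  assumes "holder_space \<alpha> S \<phi>" "x \<in> S" "y \<in> S" "x \<noteq> y"
  shows "0 \<le> holder_seminorm \<alpha> S \<phi>"
proof -
  have "0 \<le> holder_seminorm \<alpha> S \<phi> * dist x y powr \<alpha>"
    using holder_space_norm_diff_le[OF assms] norm_ge_zero order_trans by blast
  with assms(4) show ?thesis
    by (simp add: zero_le_mult_iff)
qed

lemma SUP_norm_le_holder_norm:
  assumes "holder_space \<alpha> S \<phi>" "T \<subseteq> S" "T \<noteq> {}" "x \<in> S" "y \<in> S" "x \<noteq> y"
  shows "(SUP z\<in>T. norm (\<phi> z)) \<le> holder_norm \<alpha> S \<phi>"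
proof -
  have "(SUP z\<in>T. norm (\<phi> z)) \<le> (SUP z\<in>S. norm (\<phi> z))"
    using assms(1-3) by (intro cSUP_subset_mono) (auto simp: holder_space_def)
  with holder_seminorm_nonneg[OF assms(1,4-6)] show ?thesis
    by (cases "\<alpha> = 0") (simp add: holder_norm_def, simp add: holder_norm_eq_sup_plus_seminorm)
qed

lemma holder_seminorm_le_holder_norm:
  assumes "holder_space \<alpha> S \<phi>" "\<alpha> \<noteq> 0" "x \<in> S"
  shows "holder_seminorm \<alpha> S \<phi> \<le> holder_norm \<alpha> S \<phi>"
proof -
  have "0 \<le> (SUP z\<in>S. norm (\<phi> z))"
    using assms(1,3) by (intro cSUP_upper2[of _ _ x]) (auto simp: holder_space_def)
  then show ?thesis
    by (simp add: holder_norm_eq_sup_plus_seminorm[OF assms(2)])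
qed

lemma holder_space_norm_diff_le_diameter:
  assumes hol: "holder_space \<alpha> S \<phi>" and "bounded S" "0 < \<alpha>" "x \<in> S" "y \<in> S" "x \<noteq> y"
  shows "norm (\<phi> x - \<phi> y) \<le> holder_norm \<alpha> S \<phi> * diameter S powr \<alpha>"
proof -
  have "norm (\<phi> x - \<phi> y) \<le> holder_seminorm \<alpha> S \<phi> * dist x y powr \<alpha>"
    using holder_space_norm_diff_le[OF assms(1,4-6)] .
  also have "\<dots> \<le> holder_seminorm \<alpha> S \<phi> * diameter S powr \<alpha>"
    using holder_seminorm_nonneg[OF assms(1,4-6)] diameter_bounded_bound[OF assms(2,4,5)] \<open>0 < \<alpha>\<close>
    by (intro mult_left_mono powr_mono2) auto
  also have "\<dots> \<le> holder_norm \<alpha> S \<phi> * diameter S powr \<alpha>"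
    using holder_seminorm_le_holder_norm[OF hol _ \<open>x \<in> S\<close>] \<open>0 < \<alpha>\<close> by (simp add: mult_right_mono)
  finally show ?thesis .
qed

lemma near_constant_if_holder_ratio:
  fixes \<Omega> :: "(real^'n) set" and \<phi> :: "real^'n \<Rightarrow> complex"
  assumes \<Omega>: "open \<Omega>" "bounded \<Omega>" "\<Omega> \<noteq> {}" and \<alpha>: "0 \<le> \<alpha>" "\<alpha> \<le> 1" and "1 < C"
    and hol: "holder_space \<alpha> (closure \<Omega>) \<phi>"
    and ratio: "(SUP x\<in>frontier \<Omega>. norm (\<phi> x)) / holder_norm \<alpha> (closure \<Omega>) \<phi> \<ge> C * diameter \<Omega> powr \<alpha>"
  obtains c where "c \<noteq> 0" "diameter \<Omega> \<le> 1 / C" "\<And>y. y \<in> \<Omega> \<Longrightarrow> norm (\<phi> y - c) \<le> norm c / C"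
proof -
  define N where "N = holder_norm \<alpha> (closure \<Omega>) \<phi>"
  define d where "d = diameter \<Omega>"
  have "frontier \<Omega> \<noteq> {}"
    using frontier_not_empty \<Omega>(2,3) not_bounded_UNIV by blast
  moreover have "continuous_on (frontier \<Omega>) \<phi>"
    using hol continuous_on_subset[of "closure \<Omega>" \<phi> "frontier \<Omega>"] unfolding holder_space_def frontier_def by blast
  ultimately obtain x1 where x1: "x1 \<in> frontier \<Omega>" and B: "(SUP x\<in>frontier \<Omega>. norm (\<phi> x)) = norm (\<phi> x1)"
    using compact_attains_SUP_norm[OF compact_frontier_bounded[OF \<Omega>(2)]] by blast
  have x1_closure: "x1 \<in> closure \<Omega>" and x1_not_in: "x1 \<notin> \<Omega>"
    using x1 \<Omega>(1) frontier_disjoint_eq by (auto simp: frontier_def)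
  have osc: "norm (\<phi> y - \<phi> x1) \<le> N * d powr \<alpha>" if "y \<in> \<Omega>" "\<alpha> \<noteq> 0" for y
    using holder_space_norm_diff_le_diameter[OF hol bounded_closure[OF \<Omega>(2)] _ _ x1_closure] that \<alpha>
      x1_not_in closure_subset by (auto simp: N_def d_def diameter_closure[OF \<Omega>(2)])
  obtain y0 where "y0 \<in> \<Omega>"
    using \<Omega>(3) by blast
  then have "0 < d"
    using diameter_bounded_bound[OF bounded_closure[OF \<Omega>(2)] closure_subset[THEN subsetD] x1_closure]
      x1_not_in by (metis d_def diameter_closure[OF \<Omega>(2)] dist_pos_lt order_less_le_trans)
  have "norm (\<phi> x1) \<le> N"
    using SUP_norm_le_holder_norm[OF hol _ \<open>frontier \<Omega> \<noteq> {}\<close> x1_closure, of y0] B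
      \<open>y0 \<in> \<Omega>\<close> x1_not_in closure_subset by (auto simp: N_def frontier_def)
  moreover have "0 < C * d powr \<alpha>"
    using \<open>1 < C\<close> \<open>0 < d\<close> by simp
  ultimately have "0 < N"
    using ratio B divide_nonneg_nonpos[of "norm (\<phi> x1)" N] unfolding N_def d_def by force
  then have scaled: "C * d powr \<alpha> * N \<le> norm (\<phi> x1)"
    using ratio B by (simp add: N_def d_def pos_le_divide_eq)
  then have "C * d powr \<alpha> * N \<le> 1 * N"
    using \<open>norm (\<phi> x1) \<le> N\<close> by simp
  then have "d powr \<alpha> \<le> 1 / C"
    using \<open>0 < N\<close> \<open>1 < C\<close> by (simp add: field_simps)
  then have "\<alpha> \<noteq> 0" and "d \<le> 1 / C"
    using \<open>0 < d\<close> \<alpha> \<open>1 < C\<close> le_if_powr_le_below_one[of d \<alpha> "1 / C"] by auto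
  moreover have "\<phi> x1 \<noteq> 0"
    using scaled \<open>0 < C * d powr \<alpha>\<close> \<open>0 < N\<close> by (metis mult_pos_pos norm_zero not_le)
  moreover have "N * d powr \<alpha> \<le> norm (\<phi> x1) / C"
    using scaled \<open>1 < C\<close> by (simp add: field_simps)
  ultimately show ?thesis
    using that[of "\<phi> x1"] osc unfolding d_def by force
qed

theorem theorem2p1:
  fixes k Rm :: real
  assumes "CARD('n) \<ge> 2" and "k > 0" and "Rm > 0"
  shows "\<exists>C>0. \<forall>\<alpha>::real. \<forall>\<Omega>::(real^'n) set. \<forall>\<phi>::real^'n \<Rightarrow> complex.
     0 \<le> \<alpha> \<and> \<alpha> \<le> 1 \<and> lipschitz_domain \<Omega> \<and> diameter \<Omega> \<le> Rm \<and> connected (- \<Omega>) \<and>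
     holder_space \<alpha> (closure \<Omega>) \<phi> \<and>
     (SUP x\<in>frontier \<Omega>. norm (\<phi> x)) / holder_norm \<alpha> (closure \<Omega>) \<phi> \<ge> C * diameter \<Omega> powr \<alpha>
     \<longrightarrow> radiates_nonzero k \<Omega> \<phi>"
proof (intro exI[of _ "2 * k + 2"] conjI allI impI; (elim conjE)?)
  show "0 < 2 * k + 2"
    using \<open>k > 0\<close> by simp
next
  fix \<alpha> :: real and \<Omega> :: "(real^'n) set" and \<phi> :: "real^'n \<Rightarrow> complex"
  assume \<alpha>: "0 \<le> \<alpha>" "\<alpha> \<le> 1" and "lipschitz_domain \<Omega>" "diameter \<Omega> \<le> Rm" "connected (- \<Omega>)"
    and hol: "holder_space \<alpha> (closure \<Omega>) \<phi>"
    and ratio: "(SUP x\<in>frontier \<Omega>. norm (\<phi> x)) / holder_norm \<alpha> (closure \<Omega>) \<phi> \<ge> (2 * k + 2) * diameter \<Omega> powr \<alpha>"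
  then have \<Omega>: "open \<Omega>" "bounded \<Omega>" "\<Omega> \<noteq> {}"
    by (auto simp: lipschitz_domain_def)
  obtain c where "c \<noteq> 0" "diameter \<Omega> \<le> 1 / (2 * k + 2)"
    and near: "\<And>y. y \<in> \<Omega> \<Longrightarrow> norm (\<phi> y - c) \<le> norm c / (2 * k + 2)"
    using near_constant_if_holder_ratio[OF \<Omega> \<alpha> _ hol ratio] \<open>k > 0\<close> by auto
  then have "k * diameter \<Omega> * (norm c + norm c / (2 * k + 2)) + norm c / (2 * k + 2) < norm c"
    using margin_lt_if_le_inverse \<open>k > 0\<close> diameter_ge_0[OF \<Omega>(2)] by simp
  moreover have "continuous_on \<Omega> \<phi>"
    using hol closure_subset continuous_on_subset unfolding holder_space_def by blast
  ultimately show "radiates_nonzero k \<Omega> \<phi>"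
    using radiates_nonzero_if_near_constant[OF \<open>k > 0\<close> \<Omega>] near by blast
qed

end
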